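(* Let $N\ge2$ and $\mathbf x=(x_0,\dots,x_{N-1})\in\mathbb{C}^N$ with $x_0\neq0$ and $\operatorname{Re}x_0\neq0$; put $\sigma=\operatorname{sign}(\operatorname{Re}x_0)$ and $s=x_0/|x_0|$. Let $H_{\mathbf T},H_{\mathbf M},H_{\mathbf G}$ be the $\mathbf T$-, $\mathbf M$-, $\mathbf G$-type DsiHTs generated by $\mathbf x$. Then $$H_{\mathbf T}=\operatorname{diag}(\sigma,\ \sigma s,\ 1,\dots,1)\,H_{\mathbf M},\qquad H_{\mathbf G}=\operatorname{diag}(s,\ 1,\dots,1)\,H_{\mathbf M}.$$ In particular, rows $2,\dots,N-1$ of $H_{\mathbf T}$, $H_{\mathbf M}$ and $H_{\mathbf G}$ coincide, so $H_{\mathbf T}$ and $H_{\mathbf G}$ differ at most in their first two rows (rows $0$ and $1$), and $H_{\mathbf T}$ and $H_{\mathbf M}$ differ at most in rows $0$ and $1$ (only in row $1$ when $\operatorname{Re}x_0>0$).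
   Context: For $a,b\in\mathbb{C}$ and $n=\sqrt{|a|^2+|b|^2}$: $\mathbf{T}(a,b)=\frac{\operatorname{sign}(\operatorname{Re} a)}{n}\begin{bmatrix}\bar a & \bar b\\ -b & a\end{bmatrix}$ (for $\operatorname{Re}a\ne0$); $\mathbf{M}(a,b)=\frac{1}{n}\begin{bmatrix}\bar a & \bar b\\ -b\,\bar a/|a| & |a|\end{bmatrix}$ and $\mathbf{G}(a,b)=\frac{1}{n}\begin{bmatrix}|a| & (a/|a|)\bar b\\ -b\,\bar a/|a| & |a|\end{bmatrix}$ (for $a\neq0$). For a $2\times2$ matrix $B$, $B^{[p,q]}$ is the $N\times N$ matrix acting as $B$ on coordinates $(p,q)$ and as identity elsewhere. For $\mathbf Y\in\{\mathbf T,\mathbf M,\mathbf G\}$, the $\mathbf Y$-type DsiHT (natural path) generated by $\mathbf x$ is defined by: $a^{(0)}=x_0$; for $k=1,\dots,N-1$, $B_k=\mathbf Y(a^{(k-1)},x_k)$ and $a^{(k)}$ is the first component of $B_k(a^{(k-1)},x_k)^T$; $H_{\mathbf Y}=B_{N-1}^{[0,N-1]}\cdots B_1^{[0,1]}$. (Under the hypotheses all $B_k$ are well defined.) $\operatorname{sign}(t)\in\{\pm1\}$ is the sign of a nonzero real $t$. *)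

theory Defs
  imports Complex_Main
begin

text \<open>Matrices are represented as functions nat \<Rightarrow> nat \<Rightarrow> complex; an N x N matrix
  is one whose entries with indices in {0..<N} are meaningful.  A 2x2 matrix
  uses indices 0 and 1.\<close>

type_synonym cmat = "nat \<Rightarrow> nat \<Rightarrow> complex"

definition mat2 :: "complex \<Rightarrow> complex \<Rightarrow> complex \<Rightarrow> complex \<Rightarrow> cmat" where
  "mat2 a11 a12 a21 a22 = (\<lambda>i j. if i = 0 then (if j = 0 then a11 else a12)
                                    else (if j = 0 then a21 else a22))"

definition csign :: "real \<Rightarrow> complex" where
  "csign t = (if t > 0 then 1 else -1)"

definition nrm :: "complex \<Rightarrow> complex \<Rightarrow> real" where
  "nrm a b = sqrt ((cmod a)\<^sup>2 + (cmod b)\<^sup>2)"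

definition Tmat :: "complex \<Rightarrow> complex \<Rightarrow> cmat" where
  "Tmat a b = (\<lambda>i j. (csign (Re a) / complex_of_real (nrm a b)) *
       mat2 (cnj a) (cnj b) (- b) a i j)"

definition Mmat :: "complex \<Rightarrow> complex \<Rightarrow> cmat" where
  "Mmat a b = (\<lambda>i j. (1 / complex_of_real (nrm a b)) *
       mat2 (cnj a) (cnj b) (- b * cnj a / complex_of_real (cmod a)) (complex_of_real (cmod a)) i j)"

definition Gmat :: "complex \<Rightarrow> complex \<Rightarrow> cmat" where
  "Gmat a b = (\<lambda>i j. (1 / complex_of_real (nrm a b)) *
       mat2 (complex_of_real (cmod a)) ((a / complex_of_real (cmod a)) * cnj b)
            (- b * cnj a / complex_of_real (cmod a)) (complex_of_real (cmod a)) i j)"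

definition embed :: "cmat \<Rightarrow> nat \<Rightarrow> nat \<Rightarrow> cmat" where
  "embed B p q = (\<lambda>i j.
     if (i = p \<or> i = q) \<and> (j = p \<or> j = q)
     then B (if i = p then 0 else 1) (if j = p then 0 else 1)
     else (if i = j then 1 else 0))"

definition idm :: cmat where
  "idm = (\<lambda>i j. if i = j then 1 else 0)"

definition mmul :: "nat \<Rightarrow> cmat \<Rightarrow> cmat \<Rightarrow> cmat" where
  "mmul N A B = (\<lambda>i j. \<Sum>k<N. A i k * B k j)"

definition diagm :: "(nat \<Rightarrow> complex) \<Rightarrow> cmat" where
  "diagm d = (\<lambda>i j. if i = j then d i else 0)"

text \<open>Natural path: a^(0) = x_0, a^(k) = first component of B_k (a^(k-1), x_k)^T,
  with B_k = Y(a^(k-1), x_k).\<close>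
fun dsi_a :: "(complex \<Rightarrow> complex \<Rightarrow> cmat) \<Rightarrow> (nat \<Rightarrow> complex) \<Rightarrow> nat \<Rightarrow> complex" where
  "dsi_a Y x 0 = x 0"
| "dsi_a Y x (Suc k) =
     (let B = Y (dsi_a Y x k) (x (Suc k)) in B 0 0 * dsi_a Y x k + B 0 1 * x (Suc k))"

definition dsi_B :: "(complex \<Rightarrow> complex \<Rightarrow> cmat) \<Rightarrow> (nat \<Rightarrow> complex) \<Rightarrow> nat \<Rightarrow> cmat" where
  "dsi_B Y x k = Y (dsi_a Y x (k - 1)) (x k)"

fun dsi_P :: "(complex \<Rightarrow> complex \<Rightarrow> cmat) \<Rightarrow> (nat \<Rightarrow> complex) \<Rightarrow> nat \<Rightarrow> nat \<Rightarrow> cmat" where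
  "dsi_P Y x N 0 = idm"
| "dsi_P Y x N (Suc k) = mmul N (embed (dsi_B Y x (Suc k)) 0 (Suc k)) (dsi_P Y x N k)"

definition DsiHT :: "(complex \<Rightarrow> complex \<Rightarrow> cmat) \<Rightarrow> (nat \<Rightarrow> complex) \<Rightarrow> nat \<Rightarrow> cmat" where
  "DsiHT Y x N = dsi_P Y x N (N - 1)"

end

theory Submission
  imports Defs
begin

text \<open>For \<open>a \<noteq> 0\<close> the \<open>T\<close>- and \<open>G\<close>-matrices are diagonal rescalings of the
  \<open>M\<close>-matrix: \<open>T(a,b) = diag(\<sigma>\<^sub>a, \<sigma>\<^sub>a a/|a|) M(a,b)\<close> and \<open>G(a,b) = diag(a/|a|, 1) M(a,b)\<close>,
  while \<open>M(u a, b) diag(u, 1) = M(a, b)\<close> for \<open>|u| = 1\<close>.  The natural path of \<open>M\<close> is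
  real and positive after the first step, and the first rows above show that the
  paths of \<open>T\<close> and \<open>G\<close> are that path multiplied by the fixed units \<open>\<sigma>\<close> and \<open>s\<close>.
  Hence every later factor \<open>B\<^sub>k\<close> of \<open>H\<^sub>T\<close> (resp. \<open>H\<^sub>G\<close>) is the corresponding factor
  of \<open>H\<^sub>M\<close> conjugated by \<open>diag(\<sigma>, 1)\<close> (resp. \<open>diag(s, 1)\<close>), which acts on coordinate
  0 only; in the product these conjugations cancel and only the diagonal factor of
  the first step survives.\<close>

definition diag_intertwined :: "nat \<Rightarrow> cmat \<Rightarrow> (nat \<Rightarrow> complex) \<Rightarrow> (nat \<Rightarrow> complex) \<Rightarrow> cmat \<Rightarrow> bool"
  where "diag_intertwined n A u v B \<longleftrightarrow> (\<forall>i<n. \<forall>j<n. A i j * u j = v i * B i j)"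

lemma diag_intertwined_trans:
  assumes "diag_intertwined n A u v B" and "diag_intertwined n B u' v' C"
  shows "diag_intertwined n A (\<lambda>j. u j * u' j) (\<lambda>i. v i * v' i) C"
  using assms unfolding diag_intertwined_def by (metis mult.assoc mult.commute)

lemma diag_intertwined_mmul:
  assumes "diag_intertwined n A u v B" and "diag_intertwined n A' w u B'"
  shows "diag_intertwined n (mmul n A A') w v (mmul n B B')"
  unfolding diag_intertwined_def
proof (intro allI impI)
  fix i j assume "i < n" "j < n"
  have "mmul n A A' i j * w j = (\<Sum>l<n. A i l * u l * B' l j)"
    using assms(2) \<open>j < n\<close> unfolding mmul_def diag_intertwined_def
    by (auto simp: sum_distrib_right mult.assoc intro!: sum.cong)
  also have "\<dots> = v i * mmul n B B' i j"
    using assms(1) \<open>i < n\<close> unfolding mmul_def diag_intertwined_def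
    by (auto simp: sum_distrib_left mult.assoc intro!: sum.cong)
  finally show "mmul n A A' i j * w j = v i * mmul n B B' i j" .
qed

lemma diag_intertwined_idm: "diag_intertwined n idm (\<lambda>_. 1) (\<lambda>_. 1) idm"
  by (simp add: diag_intertwined_def idm_def)

lemma diag_intertwined_embed:
  assumes "m \<noteq> 0" and "\<And>i. i \<noteq> 0 \<Longrightarrow> i \<noteq> m \<Longrightarrow> u i = v i"
    and "diag_intertwined 2 A (\<lambda>q. u (if q = 0 then 0 else m)) (\<lambda>p. v (if p = 0 then 0 else m)) B"
  shows "diag_intertwined n (embed A 0 m) u v (embed B 0 m)"
  unfolding diag_intertwined_def
proof (intro allI impI)
  fix i l
  show "embed A 0 m i l * u l = v i * embed B 0 m i l"
  proof (cases "(i = 0 \<or> i = m) \<and> (l = 0 \<or> l = m)")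
    case True
    then show ?thesis
      using assms(1) assms(3)[unfolded diag_intertwined_def, rule_format,
          of "if i = 0 then 0 else 1" "if l = 0 then 0 else 1"]
      unfolding embed_def by auto
  next
    case False
    then show ?thesis using assms(2)[of i] unfolding embed_def by auto
  qed
qed

lemma mmul_diagm:
  assumes "i < n"
  shows "mmul n (diagm d) A i j = d i * A i j"
proof -
  have "mmul n (diagm d) A i j = (\<Sum>k<n. if k = i then d i * A i j else 0)"
    unfolding mmul_def diagm_def by (rule sum.cong) auto
  then show ?thesis using assms by simp
qed

lemma mat2_simps [simp]:
  "mat2 a b c d 0 0 = a" "mat2 a b c d 0 (Suc 0) = b"
  "mat2 a b c d (Suc 0) 0 = c" "mat2 a b c d (Suc 0) (Suc 0) = d"
  by (simp_all add: mat2_def)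

lemma less_2_cases: "(p::nat) < 2 \<Longrightarrow> p = 0 \<or> p = Suc 0"
  by auto

lemma nrm_pos: "a \<noteq> 0 \<Longrightarrow> nrm a b > 0"
  unfolding nrm_def by (simp add: add_pos_nonneg)

lemma nrm_unit_mult: "cmod u = 1 \<Longrightarrow> nrm (u * a) b = nrm a b"
  by (simp add: nrm_def norm_mult)

lemma cnj_mult_self_add: "cnj a * a + cnj b * b = complex_of_real ((nrm a b)\<^sup>2)"
  using complex_norm_square[of a] complex_norm_square[of b] by (simp add: nrm_def mult.commute)

lemma csign_unit: "csign t = 1 \<or> csign t = -1"
  by (simp add: csign_def)

lemma norm_csign: "cmod (csign t) = 1"
  by (simp add: csign_def)

lemma csign_Re_mult_pos: "\<sigma> = 1 \<or> \<sigma> = -1 \<Longrightarrow> r > 0 \<Longrightarrow> csign (Re (\<sigma> * complex_of_real r)) = \<sigma>"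
  by (auto simp: csign_def)

lemma Mmat_first_row:
  assumes "a \<noteq> 0"
  shows "Mmat a b 0 0 * a + Mmat a b 0 1 * b = complex_of_real (nrm a b)"
proof -
  have "Mmat a b 0 0 * a + Mmat a b 0 1 * b = (cnj a * a + cnj b * b) / complex_of_real (nrm a b)"
    by (simp add: Mmat_def add_divide_distrib)
  then show ?thesis
    using nrm_pos[OF assms] by (simp add: cnj_mult_self_add power2_eq_square)
qed

lemma Tmat_eq_diag_Mmat:
  assumes "a \<noteq> 0"
  shows "diag_intertwined 2 (Tmat a b) (\<lambda>_. 1)
           (\<lambda>p. if p = 0 then csign (Re a) else csign (Re a) * (a / complex_of_real (cmod a))) (Mmat a b)"
proof -
  have "a * cnj a = complex_of_real (cmod a) * complex_of_real (cmod a)"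
    using complex_norm_square[of a] by (simp add: power2_eq_square)
  then show ?thesis
    using assms unfolding diag_intertwined_def Tmat_def Mmat_def
    by (auto dest!: less_2_cases simp: field_simps)
qed

lemma Gmat_eq_diag_Mmat:
  assumes "a \<noteq> 0"
  shows "diag_intertwined 2 (Gmat a b) (\<lambda>_. 1)
           (\<lambda>p. if p = 0 then a / complex_of_real (cmod a) else 1) (Mmat a b)"
proof -
  have "a * cnj a = complex_of_real (cmod a) * complex_of_real (cmod a)"
    using complex_norm_square[of a] by (simp add: power2_eq_square)
  then show ?thesis
    using assms unfolding diag_intertwined_def Gmat_def Mmat_def
    by (auto dest!: less_2_cases simp: field_simps)
qed

lemma Mmat_unit_mult:
  assumes "cmod u = 1"
  shows "diag_intertwined 2 (Mmat (u * a) b) (\<lambda>q. if q = 0 then u else 1) (\<lambda>_. 1) (Mmat a b)"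
proof -
  have "cnj u * u = 1"
    using assms complex_norm_square[of u] by (simp add: mult.commute)
  moreover have "nrm (u * a) b = nrm a b" and "cmod (u * a) = cmod a"
    using assms by (simp_all add: nrm_unit_mult norm_mult)
  ultimately show ?thesis
    unfolding diag_intertwined_def Mmat_def
    by (auto dest!: less_2_cases simp del: complex_cnj_mult) (simp_all add: field_simps)
qed

lemma Tmat_Mmat_conj:
  assumes "\<sigma> = 1 \<or> \<sigma> = -1" and "r > 0"
  shows "diag_intertwined 2 (Tmat (\<sigma> * complex_of_real r) b)
           (\<lambda>q. if q = 0 then \<sigma> else 1) (\<lambda>p. if p = 0 then \<sigma> else 1) (Mmat (complex_of_real r) b)"
proof -
  have unit: "cmod \<sigma> = 1" using assms(1) by auto
  have "\<sigma> * complex_of_real r \<noteq> 0" using assms by auto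
  from diag_intertwined_trans[OF Tmat_eq_diag_Mmat[OF this] Mmat_unit_mult[OF unit]]
  show ?thesis
    using assms csign_Re_mult_pos[OF assms] unfolding diag_intertwined_def
    by (auto simp: norm_mult)
qed

lemma Gmat_Mmat_conj:
  assumes "cmod s = 1" and "r > 0"
  shows "diag_intertwined 2 (Gmat (s * complex_of_real r) b)
           (\<lambda>q. if q = 0 then s else 1) (\<lambda>p. if p = 0 then s else 1) (Mmat (complex_of_real r) b)"
proof -
  have "s * complex_of_real r \<noteq> 0" using assms by auto
  from diag_intertwined_trans[OF Gmat_eq_diag_Mmat[OF this] Mmat_unit_mult[OF assms(1)]]
  show ?thesis
    using assms unfolding diag_intertwined_def by (auto simp: norm_mult)
qed

lemma dsi_a_Mmat_nonzero:
  assumes "x 0 \<noteq> 0"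
  shows "dsi_a Mmat x k \<noteq> 0"
proof (induction k)
  case (Suc k)
  show ?case
    using Mmat_first_row[OF Suc] nrm_pos[OF Suc, of "x (Suc k)"] by (simp add: Let_def)
qed (use assms in simp)

lemma dsi_a_Mmat_Suc:
  assumes "x 0 \<noteq> 0"
  shows "dsi_a Mmat x (Suc k) = complex_of_real (nrm (dsi_a Mmat x k) (x (Suc k)))"
  using Mmat_first_row[OF dsi_a_Mmat_nonzero[of x, OF assms]] by (simp add: Let_def)

lemma dsi_a_Mmat_Suc_pos:
  assumes "x 0 \<noteq> 0"
  obtains r where "r > 0" and "dsi_a Mmat x (Suc k) = complex_of_real r"
  using that dsi_a_Mmat_Suc[of x, OF assms] nrm_pos[OF dsi_a_Mmat_nonzero[of x, OF assms]] by blast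

lemma dsi_a_rescaled_Mmat:
  assumes x0: "x 0 \<noteq> 0"
    and row: "\<And>a b q. a \<noteq> 0 \<Longrightarrow> q < 2 \<Longrightarrow> Y a b 0 q = c a * Mmat a b 0 q"
    and unit: "cmod (c (x 0)) = 1"
    and ray: "\<And>r. r > 0 \<Longrightarrow> c (c (x 0) * complex_of_real r) = c (x 0)"
  shows "dsi_a Y x (Suc k) = c (x 0) * dsi_a Mmat x (Suc k)"
proof -
  have first_row: "Y a b 0 0 * a + Y a b 0 1 * b = c a * complex_of_real (nrm a b)" if "a \<noteq> 0" for a b
  proof -
    have "Y a b 0 0 * a + Y a b 0 1 * b = c a * (Mmat a b 0 0 * a + Mmat a b 0 1 * b)"
      by (simp add: row[OF that] algebra_simps)
    then show ?thesis using Mmat_first_row[OF that] by simp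
  qed
  show ?thesis
  proof (induction k)
    case 0
    show ?case
      using first_row[OF x0] dsi_a_Mmat_Suc[of x, OF x0, of 0] by (simp add: Let_def)
  next
    case (Suc k)
    obtain r where r: "r > 0" "dsi_a Mmat x (Suc k) = complex_of_real r"
      using dsi_a_Mmat_Suc_pos[of x, OF x0] .
    define a where "a = c (x 0) * complex_of_real r"
    have a: "a \<noteq> 0" "c a = c (x 0)" and path: "dsi_a Y x (Suc k) = a"
      using Suc unit r ray unfolding a_def by auto
    have "dsi_a Y x (Suc (Suc k)) = c (x 0) * complex_of_real (nrm a (x (Suc (Suc k))))"
      using first_row[OF a(1)] a(2) path by (simp add: Let_def)
    also have "\<dots> = c (x 0) * dsi_a Mmat x (Suc (Suc k))"
      using dsi_a_Mmat_Suc[of x, OF x0, of "Suc k"] r nrm_unit_mult[OF unit] unfolding a_def by simp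
    finally show ?case .
  qed
qed

lemma dsi_a_Tmat:
  "x 0 \<noteq> 0 \<Longrightarrow> dsi_a Tmat x (Suc k) = csign (Re (x 0)) * dsi_a Mmat x (Suc k)"
  by (rule dsi_a_rescaled_Mmat[where c = "\<lambda>a. csign (Re a)"])
     (use Tmat_eq_diag_Mmat norm_csign csign_unit csign_Re_mult_pos in \<open>auto simp: diag_intertwined_def\<close>)

lemma dsi_a_Gmat:
  "x 0 \<noteq> 0 \<Longrightarrow> dsi_a Gmat x (Suc k) = (x 0 / complex_of_real (cmod (x 0))) * dsi_a Mmat x (Suc k)"
  by (rule dsi_a_rescaled_Mmat[where c = "\<lambda>a. a / complex_of_real (cmod a)"])
     (use Gmat_eq_diag_Mmat in \<open>auto simp: diag_intertwined_def norm_mult norm_divide\<close>)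

lemma dsi_P_diag_intertwined:
  assumes first: "diag_intertwined 2 (dsi_B Y x 1) (\<lambda>_. 1) (\<lambda>p. if p = 0 then d0 else d1) (dsi_B Z x 1)"
    and later: "\<And>k. 2 \<le> k \<Longrightarrow> diag_intertwined 2 (dsi_B Y x k)
                  (\<lambda>q. if q = 0 then d0 else 1) (\<lambda>p. if p = 0 then d0 else 1) (dsi_B Z x k)"
    and "1 \<le> K"
  shows "diag_intertwined N (dsi_P Y x N K) (\<lambda>_. 1)
           (\<lambda>i. if i = 0 then d0 else if i = 1 then d1 else 1) (dsi_P Z x N K)"
proof -
  define d where "d i = (if i = 0 then d0 else if i = 1 then d1 else 1)" for i :: nat
  have "diag_intertwined N (dsi_P Y x N K) (\<lambda>_. 1) d (dsi_P Z x N K)"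
    using \<open>1 \<le> K\<close>
  proof (induction K rule: nat_induct_at_least)
    case base
    have d: "(\<lambda>p. d (if p = 0 then 0 else 1)) = (\<lambda>p. if p = 0 then d0 else d1)"
      by (auto simp: d_def)
    have "diag_intertwined N (embed (dsi_B Y x 1) 0 1) (\<lambda>_. 1) d (embed (dsi_B Z x 1) 0 1)"
      by (rule diag_intertwined_embed) (use first[folded d] in \<open>simp_all add: d_def\<close>)
    from diag_intertwined_mmul[OF this diag_intertwined_idm] show ?case by simp
  next
    case (Suc K)
    have d: "(\<lambda>q. d (if q = 0 then 0 else Suc K)) = (\<lambda>q. if q = 0 then d0 else 1)"
      using Suc.hyps by (auto simp: d_def)
    have "diag_intertwined N (embed (dsi_B Y x (Suc K)) 0 (Suc K)) d d (embed (dsi_B Z x (Suc K)) 0 (Suc K))"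
      by (rule diag_intertwined_embed) (use later[of "Suc K", folded d] Suc.hyps in simp_all)
    from diag_intertwined_mmul[OF this Suc.IH] show ?case by simp
  qed
  then show ?thesis unfolding d_def .
qed

lemma DsiHT_Tmat_eq_diag_Mmat:
  assumes "x 0 \<noteq> 0" and "N \<ge> 2"
  shows "diag_intertwined N (DsiHT Tmat x N) (\<lambda>_. 1)
           (\<lambda>i. if i = 0 then csign (Re (x 0))
                else if i = 1 then csign (Re (x 0)) * (x 0 / complex_of_real (cmod (x 0))) else 1)
           (DsiHT Mmat x N)"
  unfolding DsiHT_def
proof (rule dsi_P_diag_intertwined)
  show "diag_intertwined 2 (dsi_B Tmat x 1) (\<lambda>_. 1)
          (\<lambda>p. if p = 0 then csign (Re (x 0)) else csign (Re (x 0)) * (x 0 / complex_of_real (cmod (x 0))))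
          (dsi_B Mmat x 1)"
    using Tmat_eq_diag_Mmat[OF assms(1)] by (simp add: dsi_B_def)
next
  fix k :: nat assume "2 \<le> k"
  then obtain k' where k: "k = Suc (Suc k')" by (metis add_2_eq_Suc le_Suc_ex)
  obtain r where "r > 0" "dsi_a Mmat x (Suc k') = complex_of_real r"
    using dsi_a_Mmat_Suc_pos[of x, OF assms(1)] .
  with Tmat_Mmat_conj[OF csign_unit this(1)] dsi_a_Tmat[of x k', OF assms(1)]
  show "diag_intertwined 2 (dsi_B Tmat x k) (\<lambda>q. if q = 0 then csign (Re (x 0)) else 1)
          (\<lambda>p. if p = 0 then csign (Re (x 0)) else 1) (dsi_B Mmat x k)"
    by (simp add: dsi_B_def k)
qed (use assms(2) in simp)

lemma DsiHT_Gmat_eq_diag_Mmat: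
  assumes "x 0 \<noteq> 0" and "N \<ge> 2"
  shows "diag_intertwined N (DsiHT Gmat x N) (\<lambda>_. 1)
           (\<lambda>i. if i = 0 then x 0 / complex_of_real (cmod (x 0)) else 1) (DsiHT Mmat x N)"
proof -
  have unit: "cmod (x 0 / complex_of_real (cmod (x 0))) = 1"
    using assms(1) by (simp add: norm_divide)
  have "diag_intertwined N (DsiHT Gmat x N) (\<lambda>_. 1)
          (\<lambda>i. if i = 0 then x 0 / complex_of_real (cmod (x 0)) else if i = 1 then 1 else 1) (DsiHT Mmat x N)"
    unfolding DsiHT_def
  proof (rule dsi_P_diag_intertwined)
    show "diag_intertwined 2 (dsi_B Gmat x 1) (\<lambda>_. 1)
            (\<lambda>p. if p = 0 then x 0 / complex_of_real (cmod (x 0)) else 1) (dsi_B Mmat x 1)"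
      using Gmat_eq_diag_Mmat[OF assms(1)] by (simp add: dsi_B_def)
  next
    fix k :: nat assume "2 \<le> k"
    then obtain k' where k: "k = Suc (Suc k')" by (metis add_2_eq_Suc le_Suc_ex)
    obtain r where "r > 0" "dsi_a Mmat x (Suc k') = complex_of_real r"
      using dsi_a_Mmat_Suc_pos[of x, OF assms(1)] .
    with Gmat_Mmat_conj[OF unit this(1)] dsi_a_Gmat[of x k', OF assms(1)]
    show "diag_intertwined 2 (dsi_B Gmat x k) (\<lambda>q. if q = 0 then x 0 / complex_of_real (cmod (x 0)) else 1)
            (\<lambda>p. if p = 0 then x 0 / complex_of_real (cmod (x 0)) else 1) (dsi_B Mmat x k)"
      by (simp add: dsi_B_def k)
  qed (use assms(2) in simp)
  then show ?thesis by (simp add: diag_intertwined_def)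
qed

theorem mainTheorem7:
  fixes N :: nat and x :: "nat \<Rightarrow> complex"
  assumes "N \<ge> 2" and "x 0 \<noteq> 0" and "Re (x 0) \<noteq> 0"
  defines "\<sigma> \<equiv> csign (Re (x 0))"
      and "s \<equiv> x 0 / complex_of_real (cmod (x 0))"
  shows "(\<forall>i<N. \<forall>j<N. DsiHT Tmat x N i j =
            mmul N (diagm (\<lambda>i. if i = 0 then \<sigma> else if i = 1 then \<sigma> * s else 1))
                   (DsiHT Mmat x N) i j)
       \<and> (\<forall>i<N. \<forall>j<N. DsiHT Gmat x N i j =
            mmul N (diagm (\<lambda>i. if i = 0 then s else 1)) (DsiHT Mmat x N) i j)
       \<and> (\<forall>i. 2 \<le> i \<and> i < N \<longrightarrow> (\<forall>j<N.
            DsiHT Tmat x N i j = DsiHT Mmat x N i j \<and> DsiHT Gmat x N i j = DsiHT Mmat x N i j))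
       \<and> (Re (x 0) > 0 \<longrightarrow> (\<forall>j<N. DsiHT Tmat x N 0 j = DsiHT Mmat x N 0 j))"
proof -
  have T: "\<forall>i<N. \<forall>j<N. DsiHT Tmat x N i j = (if i = 0 then \<sigma> else if i = 1 then \<sigma> * s else 1) * DsiHT Mmat x N i j"
    using DsiHT_Tmat_eq_diag_Mmat[of x N, OF assms(2,1)] unfolding diag_intertwined_def \<sigma>_def s_def by simp
  have G: "\<forall>i<N. \<forall>j<N. DsiHT Gmat x N i j = (if i = 0 then s else 1) * DsiHT Mmat x N i j"
    using DsiHT_Gmat_eq_diag_Mmat[of x N, OF assms(2,1)] unfolding diag_intertwined_def s_def by simp
  have "Re (x 0) > 0 \<Longrightarrow> \<sigma> = 1"
    unfolding \<sigma>_def csign_def by simp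
  with T G show ?thesis by (auto simp: mmul_diagm)
qed

end
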